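(* Let $N,h,Q\in\mathbb N$ with $h\to\infty$, $h=o(N)$ and $Q\ll N$ as $N\to\infty$. Let $g:\mathbb N\to\mathbb R$ with $g(q)=0$ for all $q>Q$, and let $f=g\ast\mathbf 1$, i.e. $f(n)=\sum_{d\mid n}g(d)$. Then for every nonzero integer $a\le N$, $$\mathcal C_f(a)=\sum_{\ell\mid a}\ \sum_{\substack{d,q\ge1\\(d,q)=1}}g(\ell d)g(\ell q)\frac1q\left(\left\lfloor\frac{2N}{\ell d}\right\rfloor-\left\lfloor\frac{N}{\ell d}\right\rfloor\right)+R_f(a),$$ where $$R_f(a)=\sum_{\ell\mid a}\ \sum_{\substack{d,q\ge1\\(d,q)=1}}g(\ell d)g(\ell q)\frac1q\sum_{j=1}^{q-1}e_q(-ja/\ell)\sum_{N/(\ell d)<m\le 2N/(\ell d)}e_q(jdm).$$ Moreover, for every even function $K:\mathbb Z\to\mathbb C$ supported in $[-2h,2h]$ with $K(0)=2h$, and $N$ sufficiently large (so that $2h\le N$), $$\sum_{a\ne0}K(a)R_f(a)+K(0)\,\mathcal C_f(0)=\sum_{\ell\le 2h}\ \sum_{\substack{d,q\ge1\\(d,q)=1}}g(\ell d)g(\ell q)\frac1q\sum_{j=1}^{q-1}\ \sum_{N/(\ell d)<m\le 2N/(\ell d)}\cos\frac{2\pi jdm}{q}\sum_{a\ne0}K(a\ell)e_q(ja)+2h\,\mathcal C_f(0).$$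
   Context: $e(\theta)=e^{2\pi i\theta}$ and $e_q(m)=e(m/q)$. $\lfloor\cdot\rfloor$ is the integer part. $\ell\mid a$ ranges over positive divisors $\ell$ of $a$. The notation $n\sim N$ means $N<n\le 2N$, and for integers $a\le N$, $\mathcal C_f(a)=\sum_{n\sim N}f(n)f(n-a)$. *)

theory Defs
  imports "HOL-Analysis.Analysis"
begin

definition e :: "real \<Rightarrow> complex" where
  "e \<theta> = exp (2 * pi * \<i> * complex_of_real \<theta>)"

definition eq :: "nat \<Rightarrow> real \<Rightarrow> complex" where
  "eq q m = e (m / real q)"

text \<open>C_f(a) = sum over N < n <= 2N of f(n) f(n - a)  (used for integers a <= N,
  so that n - a >= 1).\<close>
definition Cf :: "(nat \<Rightarrow> real) \<Rightarrow> nat \<Rightarrow> int \<Rightarrow> real" where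
  "Cf f N a = (\<Sum>n\<in>{N<..2*N}. f n * f (nat (int n - a)))"

definition mrange :: "nat \<Rightarrow> nat \<Rightarrow> nat \<Rightarrow> int set" where
  "mrange N l d = {m::int. real N / real (l*d) < real_of_int m \<and> real_of_int m \<le> 2 * real N / real (l*d)}"

definition posdivs :: "int \<Rightarrow> nat set" where
  "posdivs a = {l::nat. 0 < l \<and> int l dvd a}"

definition cpairs :: "(nat \<times> nat) set" where
  "cpairs = {(d,q). 1 \<le> d \<and> 1 \<le> q \<and> coprime d q}"

definition Rf :: "(nat \<Rightarrow> real) \<Rightarrow> nat \<Rightarrow> int \<Rightarrow> complex" where
  "Rf g N a = (\<Sum>l\<in>posdivs a.
     infsum (\<lambda>(d,q). complex_of_real (g (l*d) * g (l*q) / real q) *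
        (\<Sum>j\<in>{1..<q}. eq q (- (real j * real_of_int a / real l)) *
           (\<Sum>m\<in>mrange N l d. eq q (real j * real d * real_of_int m)))) cpairs)"

end

theory Submission
  imports Defs
begin

text \<open>
  Expanding both factors of f(n) f(n - a) as divisor sums turns C_f(a) into a sum over pairs
  (d1, d2) of g(d1) g(d2) times the number of n \<in> (N, 2N] with d1 | n and d2 | n - a. Such n
  exist only if l = gcd(d1, d2) divides a; writing d1 = l d, d2 = l q with (d, q) = 1 and
  n = l d m, the count becomes the number of m \<in> (N/(l d), 2N/(l d)] with d m \<equiv> a/l (mod q),
  which orthogonality of the additive characters mod q expresses as 1/q times a character sum.
  The term j = 0 gives the main term, the terms 0 < j < q give R_f(a).

  For the weighted sum, K vanishes for |a| > 2h, so only l \<le> 2h contribute; substituting a = l b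
  and swapping sums leaves \<Sum>_b K(l b) e_q(-j b), which is invariant under j \<mapsto> q - j because K is
  even. Averaging the terms j and q - j turns e_q(j d m) into cos(2\<pi> j d m / q).
\<close>

lemma e_add: "e x * e y = e (x + y)"
  unfolding e_def by (simp add: exp_add[symmetric] algebra_simps)

lemma e_of_nat_mult: "e (real j * x) = e x ^ j"
  unfolding e_def by (simp add: exp_of_nat_mult[symmetric] algebra_simps)

lemma e_eq_1_iff: "e x = 1 \<longleftrightarrow> x \<in> \<int>"
proof
  assume "e x = 1"
  then obtain n :: int where "2 * pi * x = of_int (2 * n) * pi"
    unfolding e_def exp_eq_1 by auto
  then have "x = of_int n" by simp
  then show "x \<in> \<int>" by simp
next
  assume "x \<in> \<int>"
  then obtain n :: int where "x = of_int n" by (auto elim: Ints_cases)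
  then show "e x = 1" unfolding e_def exp_eq_1 by (auto intro!: exI[of _ n])
qed

lemma e_0 [simp]: "e 0 = 1"
  by (simp add: e_def)

lemma e_of_int [simp]: "e (of_int n) = 1"
  by (simp add: e_eq_1_iff)

lemma cos_eq_e: "complex_of_real (cos (2 * pi * x)) = (e x + e (- x)) / 2"
  unfolding e_def cos_of_real[symmetric] cos_exp_eq by (simp add: algebra_simps)

lemma eq_of_nat_diff:
  assumes "j \<le> q" "0 < q"
  shows "eq q (real (q - j) * of_int t) = eq q (- (real j * of_int t))"
proof -
  have "real (q - j) * of_int t / real q = of_int t + - (real j * of_int t) / real q"
    using assms by (simp add: of_nat_diff field_simps)
  then have "eq q (real (q - j) * of_int t) = e (of_int t) * e (- (real j * of_int t) / real q)"
    unfolding eq_def e_add by simp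
  then show ?thesis
    unfolding eq_def by simp
qed

lemma sum_e_roots_of_unity:
  assumes q: "0 < q"
  shows "(\<Sum>j<q. e (real j * of_int k / real q)) = (if int q dvd k then of_nat q else 0)"
proof -
  define w where "w = e (of_int k / real q)"
  have powers: "e (real j * of_int k / real q) = w ^ j" for j
    unfolding w_def e_of_nat_mult[symmetric] by simp
  have "w = 1 \<longleftrightarrow> int q dvd k"
  proof
    assume "w = 1"
    then obtain n :: int where "of_int k / real q = of_int n"
      unfolding w_def e_eq_1_iff by (auto elim: Ints_cases)
    then have "real_of_int k = real_of_int (int q * n)"
      using q by (simp add: field_simps)
    then show "int q dvd k" by (simp only: of_int_eq_iff dvd_triv_left)
  next
    assume "int q dvd k"
    then obtain n where "k = int q * n" by blast
    then have "of_int k / real q = of_int n"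
      using q by simp
    then show "w = 1" unfolding w_def by simp
  qed
  moreover have "w ^ q = 1"
    using q unfolding w_def e_of_nat_mult[symmetric] by simp
  ultimately show ?thesis
    by (cases "w = 1") (simp_all add: powers geometric_sum)
qed

lemma card_dvd_eq_sum_e:
  fixes R :: "int set" and t :: "int \<Rightarrow> int"
  assumes "finite R" and q: "0 < q"
  shows "of_nat q * of_nat (card {m \<in> R. int q dvd t m})
       = of_nat (card R) + (\<Sum>j\<in>{1..<q}. \<Sum>m\<in>R. e (real j * of_int (t m) / real q))"
proof -
  have "(\<Sum>m\<in>R. if int q dvd t m then of_nat q else (0 :: complex))
      = of_nat q * of_nat (card {m \<in> R. int q dvd t m})"
    using assms(1) by (simp add: sum.If_cases Int_def conj_commute)
  then have "of_nat q * of_nat (card {m \<in> R. int q dvd t m})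
      = (\<Sum>m\<in>R. if int q dvd t m then of_nat q else (0 :: complex))" ..
  also have "\<dots> = (\<Sum>m\<in>R. \<Sum>j<q. e (real j * of_int (t m) / real q))"
    using q by (simp add: sum_e_roots_of_unity)
  also have "\<dots> = (\<Sum>j<q. \<Sum>m\<in>R. e (real j * of_int (t m) / real q))"
    by (rule sum.swap)
  also have "\<dots> = (\<Sum>m\<in>R. e (real 0 * of_int (t m) / real q))
                   + (\<Sum>j\<in>{1..<q}. \<Sum>m\<in>R. e (real j * of_int (t m) / real q))"
    using q by (simp add: lessThan_atLeast0 sum.atLeast_Suc_lessThan)
  finally show ?thesis
    by simp
qed

lemma infsum_eq_sum_neutral:
  fixes f :: "'a \<Rightarrow> 'b::{comm_monoid_add,t2_space}"
  assumes "finite A" "A \<subseteq> S" "\<And>x. x \<in> S - A \<Longrightarrow> f x = 0"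
  shows "infsum f S = sum f A"
proof -
  have "infsum f S = infsum f A"
    by (rule infsum_cong_neutral) (use assms in auto)
  then show ?thesis
    using assms(1) by simp
qed

lemma infsum_cpairs_eq_sum:
  fixes H :: "nat \<times> nat \<Rightarrow> 'b::{comm_monoid_add,t2_space}"
  assumes "\<And>d q. Q < d \<or> Q < q \<Longrightarrow> H (d, q) = 0"
  shows "infsum H cpairs = sum H (cpairs \<inter> {1..Q} \<times> {1..Q})"
proof (rule infsum_eq_sum_neutral)
  fix p assume p: "p \<in> cpairs - cpairs \<inter> {1..Q} \<times> {1..Q}"
  obtain d q where [simp]: "p = (d, q)"
    by fastforce
  from p have "Q < d \<or> Q < q"
    by (auto simp: cpairs_def)
  then show "H p = 0"
    by (simp add: assms)
qed auto

lemma vanishing_at_multiple: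
  fixes g :: "nat \<Rightarrow> 'a::zero"
  assumes "\<forall>q>Q. g q = 0" "0 < l" "Q < x"
  shows "g (l * x) = 0"
proof -
  have "x \<le> l * x"
    using assms(2) by simp
  then have "Q < l * x"
    using assms(3) by linarith
  then show ?thesis
    using assms(1) by simp
qed

lemma finite_posdivs: "a \<noteq> 0 \<Longrightarrow> finite (posdivs a)"
proof -
  assume "a \<noteq> 0"
  then have "posdivs a \<subseteq> {..nat \<bar>a\<bar>}"
    unfolding posdivs_def by (auto dest: dvd_imp_le_int)
  then show ?thesis
    by (rule finite_subset) simp
qed

lemma mrange_eq_greaterThanAtMost:
  "mrange N l d = {\<lfloor>real N / real (l * d)\<rfloor><..\<lfloor>2 * real N / real (l * d)\<rfloor>}"
  unfolding mrange_def by (auto simp: floor_less_iff le_floor_iff)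

lemma finite_mrange [simp]: "finite (mrange N l d)"
  unfolding mrange_eq_greaterThanAtMost by simp

lemma card_mrange:
  "real (card (mrange N l d)) = of_int (\<lfloor>2 * real N / real (l * d)\<rfloor> - \<lfloor>real N / real (l * d)\<rfloor>)"
proof -
  have "real N / real (l * d) \<le> 2 * real N / real (l * d)"
    by (simp add: divide_right_mono)
  then have "\<lfloor>real N / real (l * d)\<rfloor> \<le> \<lfloor>2 * real N / real (l * d)\<rfloor>"
    by (rule floor_mono)
  then show ?thesis
    unfolding mrange_eq_greaterThanAtMost by simp
qed

lemma mem_mrange_iff:
  assumes "0 < l * d"
  shows "m \<in> mrange N l d \<longleftrightarrow> int N < int (l * d) * m \<and> int (l * d) * m \<le> 2 * int N"
proof -
  have "real (l * d) > 0"
    using assms by simp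
  then have "m \<in> mrange N l d \<longleftrightarrow>
      real N < real (l * d) * of_int m \<and> real (l * d) * of_int m \<le> 2 * real N"
    unfolding mrange_def by (simp add: pos_divide_less_eq pos_le_divide_eq mult.commute)
  also have "\<dots> \<longleftrightarrow> int N < int (l * d) * m \<and> int (l * d) * m \<le> 2 * int N"
    unfolding of_int_less_iff[symmetric, where 'a=real] of_int_le_iff[symmetric, where 'a=real]
    by simp
  finally show ?thesis .
qed

lemma card_multiples_in_interval:
  fixes P :: "int \<Rightarrow> bool"
  assumes k: "0 < k"
  shows "card {n \<in> {N<..2*N}. k dvd n \<and> P (int n)}
       = card {m. int N < int k * m \<and> int k * m \<le> 2 * int N \<and> P (int k * m)}"
proof -
  define M where "M = {m. int N < int k * m \<and> int k * m \<le> 2 * int N \<and> P (int k * m)}"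
  define S where "S = {n \<in> {N<..2*N}. k dvd n \<and> P (int n)}"
  have "bij_betw (\<lambda>m. nat (int k * m)) M S"
  proof (rule bij_betw_byWitness[where f' = "\<lambda>n. int n div int k"])
    show "\<forall>m\<in>M. int (nat (int k * m)) div int k = m"
      using k by (auto simp: M_def)
    show "\<forall>n\<in>S. nat (int k * (int n div int k)) = n"
      by (auto simp: S_def elim!: dvdE simp flip: of_nat_mult)
    show "(\<lambda>m. nat (int k * m)) ` M \<subseteq> S"
    proof
      fix n assume "n \<in> (\<lambda>m. nat (int k * m)) ` M"
      then obtain m where m: "m \<in> M" and n: "n = nat (int k * m)"
        by blast
      then have n_eq: "int n = int k * m"
        by (simp add: M_def)
      then have "k dvd n"
        by (metis dvd_triv_left of_nat_dvd_iff)
      with m n_eq show "n \<in> S"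
        by (auto simp: M_def S_def)
    qed
    show "(\<lambda>n. int n div int k) ` S \<subseteq> M"
    proof
      fix m assume "m \<in> (\<lambda>n. int n div int k) ` S"
      then obtain n j where n: "n \<in> S" "n = k * j" and m: "m = int n div int k"
        by (auto simp: S_def)
      then have "m = int j" "int n = int k * int j"
        using k by simp_all
      with n show "m \<in> M"
        by (auto simp: M_def S_def simp flip: of_nat_mult)
    qed
  qed
  then show ?thesis
    unfolding M_def S_def by (simp add: bij_betw_same_card)
qed

lemma card_multiples_eq_card_mrange:
  assumes l: "0 < l" and d: "0 < d" and la: "int l dvd a"
  shows "card {n \<in> {N<..2*N}. l * d dvd n \<and> int (l * q) dvd int n - a}
       = card {m \<in> mrange N l d. int q dvd int d * m - a div int l}"
proof -
  have cong_iff: "int l * int q dvd int l * int d * m - a \<longleftrightarrow> int q dvd int d * m - a div int l"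
    for m
  proof -
    have "int l * int d * m - a = int l * (int d * m - a div int l)"
      using la by (simp add: algebra_simps)
    then show ?thesis
      using l by simp
  qed
  have "{m. int N < int (l * d) * m \<and> int (l * d) * m \<le> 2 * int N
            \<and> int (l * q) dvd int (l * d) * m - a}
      = {m \<in> mrange N l d. int q dvd int d * m - a div int l}"
    using l d by (auto simp: mem_mrange_iff cong_iff)
  then show ?thesis
    using card_multiples_in_interval[of "l * d" N "\<lambda>n. int (l * q) dvd n - a"] l d by simp
qed

definition Rf_summand :: "(nat \<Rightarrow> real) \<Rightarrow> nat \<Rightarrow> nat \<Rightarrow> int \<Rightarrow> nat \<times> nat \<Rightarrow> complex"
  where
  "Rf_summand g N l a = (\<lambda>(d, q). complex_of_real (g (l * d) * g (l * q) / real q) *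
     (\<Sum>j\<in>{1..<q}. eq q (- (real j * of_int a / real l)) *
        (\<Sum>m\<in>mrange N l d. eq q (real j * real d * of_int m))))"

lemma Rf_eq_sum_Rf_summand: "Rf g N a = (\<Sum>l\<in>posdivs a. infsum (Rf_summand g N l a) cpairs)"
  unfolding Rf_def Rf_summand_def ..

lemma infsum_Rf_summand_eq_sum:
  assumes "\<forall>q>Q. g q = 0" "0 < l"
  shows "infsum (Rf_summand g N l a) cpairs
       = sum (Rf_summand g N l a) (cpairs \<inter> {1..Q} \<times> {1..Q})"
  by (rule infsum_cpairs_eq_sum) (auto simp: Rf_summand_def vanishing_at_multiple[OF assms])

lemma divisor_sum_eq_sum_upto:
  fixes f g :: "nat \<Rightarrow> 'a::comm_monoid_add"
  assumes g_supp: "\<forall>q>Q. g q = 0"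
    and f_def: "\<forall>n>0. f n = (\<Sum>d | d dvd n. g d)"
    and n: "0 < n"
  shows "f n = (\<Sum>d\<in>{1..Q}. if d dvd n then g d else 0)"
proof -
  have "(\<Sum>d\<in>{1..Q}. if d dvd n then g d else 0) = (\<Sum>d\<in>{d \<in> {1..Q}. d dvd n}. g d)"
    by (rule sum.inter_filter[symmetric]) simp
  also have "\<dots> = (\<Sum>d | d dvd n. g d)"
  proof (rule sum.mono_neutral_left)
    show "finite {d. d dvd n}"
      using n by simp
    show "{d \<in> {1..Q}. d dvd n} \<subseteq> {d. d dvd n}"
      by blast
    show "\<forall>d\<in>{d. d dvd n} - {d \<in> {1..Q}. d dvd n}. g d = 0"
      using g_supp n by (auto simp: not_le dest: dvd_pos_nat)
  qed
  finally show ?thesis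
    using f_def n by simp
qed

lemma Cf_eq_sum_pairs:
  assumes g_supp: "\<forall>q>Q. g q = 0"
    and f_def: "\<forall>n>0. f n = (\<Sum>d | d dvd n. g d)"
    and a: "a \<le> int N"
  shows "Cf f N a = (\<Sum>(d1, d2)\<in>{1..Q} \<times> {1..Q}.
           g d1 * g d2 * real (card {n \<in> {N<..2*N}. d1 dvd n \<and> int d2 dvd int n - a}))"
proof -
  have product: "f n * f (nat (int n - a)) = (\<Sum>(d1, d2)\<in>{1..Q} \<times> {1..Q}.
          if d1 dvd n \<and> int d2 dvd int n - a then g d1 * g d2 else 0)"
    if "n \<in> {N<..2*N}" for n
  proof -
    have n: "0 < n" and na: "0 < int n - a"
      using that a by auto
    have dvd_iff: "d dvd nat (int n - a) \<longleftrightarrow> int d dvd int n - a" for d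
      using dvd_nat_abs_iff[of d "int n - a"] na by simp
    have "f n * f (nat (int n - a)) = (\<Sum>d1\<in>{1..Q}. if d1 dvd n then g d1 else 0) *
        (\<Sum>d2\<in>{1..Q}. if d2 dvd nat (int n - a) then g d2 else 0)"
      using na by (simp add: divisor_sum_eq_sum_upto[OF g_supp f_def n]
          divisor_sum_eq_sum_upto[OF g_supp f_def])
    also have "\<dots> = (\<Sum>(d1, d2)\<in>{1..Q} \<times> {1..Q}.
        (if d1 dvd n then g d1 else 0) * (if d2 dvd nat (int n - a) then g d2 else 0))"
      by (simp add: sum_product sum.cartesian_product)
    also have "\<dots> = (\<Sum>(d1, d2)\<in>{1..Q} \<times> {1..Q}.
        if d1 dvd n \<and> int d2 dvd int n - a then g d1 * g d2 else 0)"
      by (intro sum.cong refl) (auto simp: dvd_iff)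
    finally show ?thesis .
  qed
  have "Cf f N a = (\<Sum>n\<in>{N<..2*N}. \<Sum>(d1, d2)\<in>{1..Q} \<times> {1..Q}.
          if d1 dvd n \<and> int d2 dvd int n - a then g d1 * g d2 else 0)"
    unfolding Cf_def by (rule sum.cong[OF refl product])
  also have "\<dots> = (\<Sum>(d1, d2)\<in>{1..Q} \<times> {1..Q}. \<Sum>n\<in>{N<..2*N}.
          if d1 dvd n \<and> int d2 dvd int n - a then g d1 * g d2 else 0)"
    unfolding case_prod_beta by (rule sum.swap)
  also have "\<dots> = (\<Sum>(d1, d2)\<in>{1..Q} \<times> {1..Q}.
          g d1 * g d2 * real (card {n \<in> {N<..2*N}. d1 dvd n \<and> int d2 dvd int n - a}))"
    by (intro sum.cong refl) (auto simp: sum.If_cases Int_def conj_commute)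
  finally show ?thesis .
qed

lemma not_gcd_dvd_imp_no_common_solution:
  fixes d1 d2 :: nat and a :: int
  assumes "\<not> int (gcd d1 d2) dvd a"
  shows "\<not> (d1 dvd n \<and> int d2 dvd int n - a)"
proof
  assume "d1 dvd n \<and> int d2 dvd int n - a"
  then have "int (gcd d1 d2) dvd int n" "int (gcd d1 d2) dvd int n - a"
    by (meson dvd_trans gcd_dvd1 gcd_dvd2 of_nat_dvd_iff)+
  then have "int (gcd d1 d2) dvd int n - (int n - a)"
    by (rule dvd_diff)
  with assms show False
    by simp
qed

lemma bij_betw_gcd_factorization:
  "bij_betw (\<lambda>(l, d, q). (l * d, l * q))
     {(l, d, q). l \<in> posdivs a \<and> (d, q) \<in> cpairs \<and> l * d \<le> Q \<and> l * q \<le> Q}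
     {(d1, d2) \<in> {1..Q} \<times> {1..Q}. int (gcd d1 d2) dvd a}"
  (is "bij_betw ?join ?S ?T")
proof (rule bij_betw_byWitness[where f' = "\<lambda>(d1, d2). (gcd d1 d2, d1 div gcd d1 d2, d2 div gcd d1 d2)"])
  let ?split = "\<lambda>(d1, d2 :: nat). (gcd d1 d2, d1 div gcd d1 d2, d2 div gcd d1 d2)"
  show "\<forall>x\<in>?S. ?split (?join x) = x"
    by (auto simp: posdivs_def cpairs_def gcd_mult_left)
  show "\<forall>y\<in>?T. ?join (?split y) = y"
    by auto
  show "?join ` ?S \<subseteq> ?T"
    by (auto simp: posdivs_def cpairs_def gcd_mult_left)
  show "?split ` ?T \<subseteq> ?S"
  proof clarify
    fix d1 d2 assume bounds: "d1 \<in> {1..Q}" "d2 \<in> {1..Q}" and "int (gcd d1 d2) dvd a"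
    define l where "l = gcd d1 d2"
    obtain d q where d1: "d1 = l * d" and d2: "d2 = l * q"
      unfolding l_def by (meson gcd_dvd1 gcd_dvd2 dvdE)
    have "0 < d1" "0 < d2" "int l dvd a"
      using bounds \<open>int (gcd d1 d2) dvd a\<close> by (auto simp: l_def)
    then have "0 < l" "0 < d" "0 < q"
      by (auto simp: d1 d2)
    moreover have "l * gcd d q = l"
      using l_def by (auto simp: d1 d2 gcd_mult_left)
    ultimately have "coprime d q"
      by (simp add: coprime_iff_gcd_eq_1)
    have "gcd d1 d2 = l" "d1 div gcd d1 d2 = d" "d2 div gcd d1 d2 = q"
      unfolding l_def[symmetric] using \<open>0 < l\<close> by (simp_all add: d1 d2)
    with \<open>coprime d q\<close> \<open>0 < d\<close> \<open>0 < q\<close> \<open>int l dvd a\<close> \<open>0 < l\<close> bounds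
    show "gcd d1 d2 \<in> posdivs a \<and> (d1 div gcd d1 d2, d2 div gcd d1 d2) \<in> cpairs
        \<and> gcd d1 d2 * (d1 div gcd d1 d2) \<le> Q \<and> gcd d1 d2 * (d2 div gcd d1 d2) \<le> Q"
      by (simp add: posdivs_def cpairs_def d1 d2)
  qed
qed

lemma sum_pairs_by_gcd:
  fixes H :: "nat \<times> nat \<Rightarrow> 'b::comm_monoid_add" and a :: int
  assumes a: "a \<noteq> 0"
    and outside: "\<And>d1 d2. Q < d1 \<or> Q < d2 \<Longrightarrow> H (d1, d2) = 0"
    and gcd_ndvd: "\<And>d1 d2. \<not> int (gcd d1 d2) dvd a \<Longrightarrow> H (d1, d2) = 0"
  shows "(\<Sum>p\<in>{1..Q} \<times> {1..Q}. H p)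
       = (\<Sum>l\<in>posdivs a. \<Sum>(d, q)\<in>cpairs \<inter> {1..Q} \<times> {1..Q}. H (l * d, l * q))"
proof -
  define S where
    "S = {(l, d, q). l \<in> posdivs a \<and> (d, q) \<in> cpairs \<and> l * d \<le> Q \<and> l * q \<le> Q}"
  define T where "T = {(d1, d2) \<in> {1..Q} \<times> {1..Q}. int (gcd d1 d2) dvd a}"
  have "finite (cpairs \<inter> {1..Q} \<times> {1..Q})"
    by (rule finite_subset[of _ "{1..Q} \<times> {1..Q}"]) auto
  then have finite_triples: "finite (posdivs a \<times> (cpairs \<inter> {1..Q} \<times> {1..Q}))"
    using finite_posdivs[OF a] by simp
  have factor_le: "d \<le> Q" if "0 < l" "l * d \<le> Q" for l d :: nat
  proof -
    have "d \<le> l * d"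
      using that(1) by simp
    with that(2) show ?thesis
      by linarith
  qed
  have "(\<Sum>p\<in>{1..Q} \<times> {1..Q}. H p) = (\<Sum>p\<in>T. H p)"
    unfolding T_def by (rule sum.mono_neutral_right) (auto intro: gcd_ndvd)
  also have "\<dots> = (\<Sum>(l, d, q)\<in>S. H (l * d, l * q))"
    unfolding S_def T_def by (subst sum.reindex_bij_betw[OF bij_betw_gcd_factorization, symmetric])
      (simp add: case_prod_unfold)
  also have "\<dots> = (\<Sum>(l, d, q)\<in>posdivs a \<times> (cpairs \<inter> {1..Q} \<times> {1..Q}). H (l * d, l * q))"
    using finite_triples factor_le
    by (intro sum.mono_neutral_left) (auto simp: S_def cpairs_def posdivs_def intro: outside)
  finally show ?thesis
    by (simp add: sum.cartesian_product)
qed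

lemma main_term_add_Rf_summand:
  assumes l: "0 < l" and la: "int l dvd a" and q: "0 < q"
  shows "complex_of_real (g (l * d) * g (l * q) / real q *
           of_int (\<lfloor>2 * real N / real (l * d)\<rfloor> - \<lfloor>real N / real (l * d)\<rfloor>))
       + Rf_summand g N l a (d, q)
     = complex_of_real (g (l * d) * g (l * q) *
         real (card {m \<in> mrange N l d. int q dvd int d * m - a div int l}))"
proof -
  define G where "G = g (l * d) * g (l * q)"
  define b where "b = a div int l"
  define R where "R = mrange N l d"
  have "real j * of_int a / real l = real j * of_int b" for j
    using l la by (auto simp: b_def elim!: dvdE)
  then have twist: "eq q (- (real j * of_int a / real l)) * eq q (real j * real d * of_int m)
      = e (real j * of_int (int d * m - b) / real q)" for j m
    unfolding eq_def e_add by (simp add: diff_divide_distrib add_divide_distrib algebra_simps)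
  have "of_nat (card R) + (\<Sum>j\<in>{1..<q}. eq q (- (real j * of_int a / real l)) *
          (\<Sum>m\<in>R. eq q (real j * real d * of_int m)))
      = of_nat (card R) + (\<Sum>j\<in>{1..<q}. \<Sum>m\<in>R. e (real j * of_int (int d * m - b) / real q))"
    by (simp add: sum_distrib_left twist)
  also have "\<dots> = of_nat q * of_nat (card {m \<in> R. int q dvd int d * m - b})"
    unfolding R_def using q by (rule card_dvd_eq_sum_e[symmetric, OF finite_mrange])
  finally have counted: "of_nat (card R) + (\<Sum>j\<in>{1..<q}. eq q (- (real j * of_int a / real l)) *
          (\<Sum>m\<in>R. eq q (real j * real d * of_int m)))
      = of_nat q * of_nat (card {m \<in> R. int q dvd int d * m - b})" .
  have main: "complex_of_real (G / real q *
           of_int (\<lfloor>2 * real N / real (l * d)\<rfloor> - \<lfloor>real N / real (l * d)\<rfloor>))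
      = complex_of_real (G / real q) * of_nat (card R)"
    unfolding R_def card_mrange[symmetric] by simp
  have rem: "Rf_summand g N l a (d, q) = complex_of_real (G / real q) *
      (\<Sum>j\<in>{1..<q}. eq q (- (real j * of_int a / real l)) *
         (\<Sum>m\<in>R. eq q (real j * real d * of_int m)))"
    unfolding Rf_summand_def G_def R_def by simp
  have "complex_of_real (G / real q *
           of_int (\<lfloor>2 * real N / real (l * d)\<rfloor> - \<lfloor>real N / real (l * d)\<rfloor>))
       + Rf_summand g N l a (d, q)
     = complex_of_real (G / real q) * (of_nat q * of_nat (card {m \<in> R. int q dvd int d * m - b}))"
    unfolding main rem distrib_left[symmetric] counted ..
  also have "\<dots> = complex_of_real (G * real (card {m \<in> R. int q dvd int d * m - b}))"
    using q by simp
  finally show ?thesis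
    unfolding G_def R_def b_def .
qed

lemma Cf_eq_main_term_add_Rf:
  fixes g f :: "nat \<Rightarrow> real" and a :: int
  assumes g_supp: "\<forall>q>Q. g q = 0"
    and f_def: "\<forall>n>0. f n = (\<Sum>d | d dvd n. g d)"
    and a: "a \<noteq> 0" "a \<le> int N"
  shows "complex_of_real (Cf f N a) =
           (\<Sum>l\<in>posdivs a.
              infsum (\<lambda>(d, q). complex_of_real (g (l * d) * g (l * q) / real q *
                 of_int (\<lfloor>2 * real N / real (l * d)\<rfloor> - \<lfloor>real N / real (l * d)\<rfloor>))) cpairs)
         + Rf g N a"
proof -
  define CP where "CP = cpairs \<inter> {1..Q} \<times> {1..Q}"
  define count where "count d1 d2 = card {n \<in> {N<..2*N}. d1 dvd n \<and> int d2 dvd int n - a}"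
    for d1 d2
  define main where "main l = (\<lambda>(d, q). complex_of_real (g (l * d) * g (l * q) / real q *
      of_int (\<lfloor>2 * real N / real (l * d)\<rfloor> - \<lfloor>real N / real (l * d)\<rfloor>)))" for l
  have split:
    "complex_of_real (case p of (d, q) \<Rightarrow> g (l * d) * g (l * q) * real (count (l * d) (l * q)))
      = main l p + Rf_summand g N l a p" if "l \<in> posdivs a" "p \<in> CP" for l p
  proof -
    obtain d q where p: "p = (d, q)"
      by fastforce
    have lq: "0 < l" "int l dvd a" "0 < d" "0 < q"
      using that by (auto simp: p posdivs_def CP_def cpairs_def)
    show ?thesis
      unfolding p main_def prod.case main_term_add_Rf_summand[OF lq(1,2,4)] count_def
        card_multiples_eq_card_mrange[OF lq(1,3,2)] ..
  qed
  have main_finite: "infsum (main l) cpairs = sum (main l) CP" if "l \<in> posdivs a" for l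
    using that unfolding CP_def posdivs_def
    by (intro infsum_cpairs_eq_sum) (auto simp: main_def vanishing_at_multiple[OF g_supp])
  have "complex_of_real (Cf f N a)
      = complex_of_real (\<Sum>(d1, d2)\<in>{1..Q} \<times> {1..Q}. g d1 * g d2 * real (count d1 d2))"
    using Cf_eq_sum_pairs[OF g_supp f_def a(2)] by (simp add: count_def)
  also have "\<dots> = complex_of_real (\<Sum>l\<in>posdivs a. \<Sum>(d, q)\<in>CP.
      g (l * d) * g (l * q) * real (count (l * d) (l * q)))"
    unfolding CP_def using g_supp
    by (subst sum_pairs_by_gcd[OF a(1)]) (auto simp: count_def not_gcd_dvd_imp_no_common_solution)
  also have "\<dots> = (\<Sum>l\<in>posdivs a. \<Sum>p\<in>CP. main l p + Rf_summand g N l a p)"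
    unfolding of_real_sum by (intro sum.cong refl split)
  also have "\<dots> = (\<Sum>l\<in>posdivs a. infsum (main l) cpairs + infsum (Rf_summand g N l a) cpairs)"
    unfolding CP_def using g_supp
    by (intro sum.cong refl)
      (simp add: sum.distrib main_finite[unfolded CP_def] infsum_Rf_summand_eq_sum posdivs_def)
  finally show ?thesis
    by (simp add: sum.distrib Rf_eq_sum_Rf_summand main_def)
qed

lemma sum_over_divisors_swap:
  fixes F :: "nat \<Rightarrow> int \<Rightarrow> 'b::comm_monoid_add"
  assumes "finite A" "finite L" "0 \<notin> L"
  shows "(\<Sum>a\<in>A. \<Sum>l\<in>{l \<in> L. int l dvd a}. F l a)
       = (\<Sum>l\<in>L. \<Sum>b\<in>{b. int l * b \<in> A}. F l (int l * b))"
proof -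
  have "(\<Sum>a\<in>A. \<Sum>l\<in>{l \<in> L. int l dvd a}. F l a)
      = (\<Sum>l\<in>L. \<Sum>a\<in>{a \<in> A. int l dvd a}. F l a)"
    using assms(1,2) by (rule sum.swap_restrict)
  also have "\<dots> = (\<Sum>l\<in>L. \<Sum>b\<in>{b. int l * b \<in> A}. F l (int l * b))"
  proof (rule sum.cong[OF refl])
    fix l assume "l \<in> L"
    then have "0 < l"
      using assms(3) by (auto intro: gr0I)
    then show "(\<Sum>a\<in>{a \<in> A. int l dvd a}. F l a)
        = (\<Sum>b\<in>{b. int l * b \<in> A}. F l (int l * b))"
      by (intro sum.reindex_bij_witness[where i = "\<lambda>b. int l * b" and j = "\<lambda>a. a div int l"]) auto
  qed
  finally show ?thesis .
qed

lemma sum_twist_reflect_cos: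
  fixes U :: "nat \<Rightarrow> complex" and R :: "int set"
  assumes q: "0 < q" and U: "\<And>j. j \<le> q \<Longrightarrow> U (q - j) = U j"
  shows "(\<Sum>j\<in>{1..<q}. (\<Sum>m\<in>R. eq q (real j * real d * of_int m)) * U j)
       = (\<Sum>j\<in>{1..<q}. \<Sum>m\<in>R.
            complex_of_real (cos (2 * pi * real j * real d * of_int m / real q)) * U j)"
proof -
  define M where "M j = (\<Sum>m\<in>R. eq q (real j * real d * of_int m))" for j
  define M' where "M' j = (\<Sum>m\<in>R. eq q (- (real j * real d * of_int m)))" for j
  have M_reflect: "M (q - j) = M' j" if "j \<le> q" for j
    unfolding M_def M'_def
  proof (rule sum.cong[OF refl])
    fix m
    show "eq q (real (q - j) * real d * of_int m) = eq q (- (real j * real d * of_int m))"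
      using eq_of_nat_diff[OF that q, of "int d * m"] by (simp add: mult.assoc)
  qed
  have "(\<Sum>j\<in>{1..<q}. M j * U j) = (\<Sum>j\<in>{1..<q}. M (q - j) * U (q - j))"
    by (rule sum.reindex_bij_witness[of _ "\<lambda>j. q - j" "\<lambda>j. q - j"]) auto
  also have "\<dots> = (\<Sum>j\<in>{1..<q}. M' j * U j)"
    by (intro sum.cong refl) (simp add: M_reflect U)
  finally have reflected: "(\<Sum>j\<in>{1..<q}. M j * U j) = (\<Sum>j\<in>{1..<q}. M' j * U j)" .
  have average: "(M j + M' j) / 2
      = (\<Sum>m\<in>R. complex_of_real (cos (2 * pi * real j * real d * of_int m / real q)))" for j
  proof -
    have cos_m: "complex_of_real (cos (2 * pi * real j * real d * of_int m / real q))
        = (eq q (real j * real d * of_int m) + eq q (- (real j * real d * of_int m))) / 2" for m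
      using cos_eq_e[of "real j * real d * of_int m / real q"] unfolding eq_def
      by (simp add: mult.assoc)
    have "(M j + M' j) / 2 = (\<Sum>m\<in>R.
        (eq q (real j * real d * of_int m) + eq q (- (real j * real d * of_int m))) / 2)"
      unfolding M_def M'_def by (simp add: sum.distrib sum_divide_distrib add_divide_distrib)
    then show ?thesis
      by (simp only: cos_m)
  qed
  have "(\<Sum>j\<in>{1..<q}. M j * U j)
      = ((\<Sum>j\<in>{1..<q}. M j * U j) + (\<Sum>j\<in>{1..<q}. M' j * U j)) / 2"
    using reflected by simp
  also have "\<dots> = (\<Sum>j\<in>{1..<q}. (M j + M' j) / 2 * U j)"
    by (simp add: sum.distrib[symmetric] sum_divide_distrib distrib_right)
  finally show ?thesis
    unfolding M_def[symmetric] average by (simp add: sum_distrib_right)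
qed

lemma sum_even_weighted_Rf_summand:
  fixes K :: "int \<Rightarrow> complex" and B :: "int set"
  assumes B: "\<And>b. b \<in> B \<Longrightarrow> - b \<in> B" and K: "\<And>a. K (- a) = K a"
    and l: "0 < l" and q: "0 < q"
  shows "(\<Sum>b\<in>B. K (int l * b) * Rf_summand g N l (int l * b) (d, q))
       = complex_of_real (g (l * d) * g (l * q) / real q) *
           (\<Sum>j\<in>{1..<q}. \<Sum>m\<in>mrange N l d.
              complex_of_real (cos (2 * pi * real j * real d * of_int m / real q)) *
              (\<Sum>b\<in>B. K (b * int l) * eq q (real j * of_int b)))"
proof -
  define c where "c = complex_of_real (g (l * d) * g (l * q) / real q)"
  define M where "M j = (\<Sum>m\<in>mrange N l d. eq q (real j * real d * of_int m))" for j
  define U where "U j = (\<Sum>b\<in>B. K (b * int l) * eq q (real j * of_int b))" for j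
  have U_conj: "(\<Sum>b\<in>B. K (b * int l) * eq q (- (real j * of_int b))) = U j" for j
    unfolding U_def by (rule sum.reindex_bij_witness[of _ uminus uminus]) (auto simp: B K)
  have U_reflect: "U (q - j) = U j" if "j \<le> q" for j
  proof -
    have "U (q - j) = (\<Sum>b\<in>B. K (b * int l) * eq q (- (real j * of_int b)))"
      unfolding U_def by (simp add: eq_of_nat_diff[OF that q])
    then show ?thesis
      by (simp add: U_conj)
  qed
  have "(\<Sum>b\<in>B. K (int l * b) * Rf_summand g N l (int l * b) (d, q))
      = c * (\<Sum>b\<in>B. \<Sum>j\<in>{1..<q}. M j * (K (b * int l) * eq q (- (real j * of_int b))))"
    unfolding Rf_summand_def prod.case c_def M_def sum_distrib_left
    using l by (intro sum.cong refl) (simp add: sum_distrib_left ac_simps)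
  also have "\<dots> = c * (\<Sum>j\<in>{1..<q}. M j * U j)"
    by (subst sum.swap) (simp add: sum_distrib_left[symmetric] U_conj)
  also have "\<dots> = c * (\<Sum>j\<in>{1..<q}. \<Sum>m\<in>mrange N l d.
      complex_of_real (cos (2 * pi * real j * real d * of_int m / real q)) * U j)"
    unfolding M_def using q U_reflect by (subst sum_twist_reflect_cos) auto
  finally show ?thesis
    unfolding c_def U_def .
qed

lemma Rf_eq_sum_upto:
  assumes g_supp: "\<forall>q>Q. g q = 0" and a: "a \<noteq> 0" "\<bar>a\<bar> \<le> int H"
  shows "Rf g N a = (\<Sum>l\<in>{l \<in> {1..H}. int l dvd a}.
            sum (Rf_summand g N l a) (cpairs \<inter> {1..Q} \<times> {1..Q}))"
proof -
  have "posdivs a = {l \<in> {1..H}. int l dvd a}"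
    using a by (auto simp: posdivs_def dest: dvd_imp_le_int)
  then show ?thesis
    unfolding Rf_eq_sum_Rf_summand
    by (intro sum.cong) (auto simp: infsum_Rf_summand_eq_sum[OF g_supp])
qed

lemma infsum_weighted_Rf:
  fixes g :: "nat \<Rightarrow> real" and K :: "int \<Rightarrow> complex"
  assumes g_supp: "\<forall>q>Q. g q = 0"
    and K_even: "\<And>a. K (- a) = K a" and K_supp: "\<And>a. 2 * int h < \<bar>a\<bar> \<Longrightarrow> K a = 0"
  shows "infsum (\<lambda>a. K a * Rf g N a) {a. a \<noteq> 0} =
           (\<Sum>l\<in>{1..2*h}.
              infsum (\<lambda>(d, q). complex_of_real (g (l * d) * g (l * q) / real q) *
                (\<Sum>j\<in>{1..<q}. \<Sum>m\<in>mrange N l d.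
                   complex_of_real (cos (2 * pi * real j * real d * of_int m / real q)) *
                   infsum (\<lambda>a. K (a * int l) * eq q (real j * of_int a)) {a. a \<noteq> 0})) cpairs)"
proof -
  define A where "A = {a :: int. a \<noteq> 0 \<and> \<bar>a\<bar> \<le> 2 * int h}"
  define B where "B l = {b. int l * b \<in> A}" for l :: nat
  define CP where "CP = cpairs \<inter> {1..Q} \<times> {1..Q}"
  define Z where "Z l = (\<lambda>(d, q). complex_of_real (g (l * d) * g (l * q) / real q) *
      (\<Sum>j\<in>{1..<q}. \<Sum>m\<in>mrange N l d.
         complex_of_real (cos (2 * pi * real j * real d * of_int m / real q)) *
         infsum (\<lambda>a. K (a * int l) * eq q (real j * of_int a)) {a. a \<noteq> 0}))" for l
  have finite_A: "finite A"
    unfolding A_def by (rule finite_subset[of _ "{- (2 * int h)..2 * int h}"]) auto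
  have K_sum_finite: "infsum (\<lambda>b. K (b * int l) * eq q (real j * of_int b)) {b. b \<noteq> 0}
      = (\<Sum>b\<in>B l. K (b * int l) * eq q (real j * of_int b))" if "0 < l" for l q j
  proof (rule infsum_eq_sum_neutral)
    show "finite (B l)"
      unfolding B_def using finite_vimageI[OF finite_A, of "\<lambda>b. int l * b"] that
      by (simp add: inj_on_def vimage_def)
  qed (use that in \<open>auto simp: A_def B_def mult.commute intro: K_supp\<close>)
  have Z_eq: "(\<Sum>b\<in>B l. K (int l * b) * Rf_summand g N l (int l * b) p) = Z l p"
    if "0 < l" "p \<in> CP" for l p
  proof -
    obtain d q where p: "p = (d, q)" and "0 < q"
      using \<open>p \<in> CP\<close> by (auto simp: CP_def cpairs_def)
    have "- b \<in> B l" if "b \<in> B l" for b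
      using that by (simp add: A_def B_def)
    then show ?thesis
      unfolding p Z_def prod.case K_sum_finite[OF \<open>0 < l\<close>]
      by (rule sum_even_weighted_Rf_summand[where K = K, OF _ K_even \<open>0 < l\<close> \<open>0 < q\<close>])
  qed
  have "infsum (\<lambda>a. K a * Rf g N a) {a. a \<noteq> 0} = (\<Sum>a\<in>A. K a * Rf g N a)"
    using finite_A by (rule infsum_eq_sum_neutral) (auto simp: A_def intro: K_supp)
  also have "\<dots> = (\<Sum>a\<in>A. \<Sum>l\<in>{l \<in> {1..2*h}. int l dvd a}. K a * sum (Rf_summand g N l a) CP)"
    unfolding CP_def
    by (intro sum.cong refl) (simp add: A_def Rf_eq_sum_upto[OF g_supp, where H = "2 * h"] sum_distrib_left)
  also have "\<dots> = (\<Sum>l\<in>{1..2*h}. \<Sum>b\<in>B l.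
      K (int l * b) * sum (Rf_summand g N l (int l * b)) CP)"
    unfolding B_def using finite_A by (rule sum_over_divisors_swap) auto
  also have "\<dots> = (\<Sum>l\<in>{1..2*h}. \<Sum>p\<in>CP. Z l p)"
    unfolding sum_distrib_left by (subst sum.swap) (simp add: Z_eq)
  also have "\<dots> = (\<Sum>l\<in>{1..2*h}. infsum (Z l) cpairs)"
    unfolding CP_def using g_supp
    by (intro sum.cong refl infsum_cpairs_eq_sum[symmetric]) (auto simp: Z_def vanishing_at_multiple)
  finally show ?thesis
    unfolding Z_def .
qed

theorem lemma3:
  fixes N h Q :: nat and g f :: "nat \<Rightarrow> real"
  assumes g_supp: "\<forall>q>Q. g q = 0"
    and f_def: "\<forall>n>0. f n = (\<Sum>d | d dvd n. g d)"
  shows "(\<forall>a::int. a \<noteq> 0 \<and> a \<le> int N \<longrightarrow>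
            complex_of_real (Cf f N a) =
              (\<Sum>l\<in>posdivs a.
                 infsum (\<lambda>(d,q). complex_of_real (g (l*d) * g (l*q) / real q *
                    real_of_int (\<lfloor>2 * real N / real (l*d)\<rfloor> - \<lfloor>real N / real (l*d)\<rfloor>))) cpairs)
              + Rf g N a)
       \<and> (\<forall>K::int \<Rightarrow> complex.
            (\<forall>a. K (-a) = K a) \<and> (\<forall>a. \<bar>a\<bar> > 2 * int h \<longrightarrow> K a = 0) \<and>
            K 0 = 2 * of_nat h \<and> 2 * h \<le> N \<longrightarrow>
            infsum (\<lambda>a. K a * Rf g N a) {a. a \<noteq> 0} + K 0 * complex_of_real (Cf f N 0) =
              (\<Sum>l\<in>{1..2*h}.
                 infsum (\<lambda>(d,q). complex_of_real (g (l*d) * g (l*q) / real q) *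
                   (\<Sum>j\<in>{1..<q}. \<Sum>m\<in>mrange N l d.
                      complex_of_real (cos (2 * pi * real j * real d * real_of_int m / real q)) *
                      infsum (\<lambda>a. K (a * int l) * eq q (real j * real_of_int a)) {a. a \<noteq> 0})) cpairs)
              + 2 * of_nat h * complex_of_real (Cf f N 0))"
proof (intro conjI allI impI, goal_cases)
  case (1 a)
  then show ?case
    using Cf_eq_main_term_add_Rf[OF g_supp f_def] by blast
next
  case (2 K)
  then have "K 0 = 2 * of_nat h" and "\<And>a. K (- a) = K a"
    and "\<And>a. 2 * int h < \<bar>a\<bar> \<Longrightarrow> K a = 0"
    by blast+
  then show ?case
    using infsum_weighted_Rf[OF g_supp, of K h N] by simp
qed

end
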